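(* For all integers $d\ge1$ and $p\ge0$, $$\|\partial_{x_i}v\|_{L^2(Q_d)}\le C_{p,1}\|v\|_{L^2(Q_d)}\qquad\forall v\in\mathbb{P}_p(Q_d),\ \forall i\in\{1,\dots,d\},$$ where $Q_d:=[0,1]^d$ is the unit hypercube and $\mathbb{P}_p(Q_d)$ the polynomials of total degree at most $p$.
   Context: $C_{p,1}$ denotes the best constant in the univariate inverse inequality $\|v'\|_{L^2(0,1)}\le C_{p,1}\|v\|_{L^2(0,1)}$ for all polynomials $v$ of degree at most $p$ on $(0,1)$. *)

theory Defs
  imports "HOL-Analysis.Analysis" "HOL-Computational_Algebra.Polynomial"
begin

definition L2_01 :: "real poly \<Rightarrow> real" where
  "L2_01 q = sqrt (integral {0..1} (\<lambda>x. (poly q x)^2))"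

definition C_p1 :: "nat \<Rightarrow> real" where
  "C_p1 p = Inf {C. \<forall>q::real poly. degree q \<le> p \<longrightarrow> L2_01 (pderiv q) \<le> C * L2_01 q}"

definition multi_idx :: "nat \<Rightarrow> ('n::finite \<Rightarrow> nat) set" where
  "multi_idx p = {\<alpha>. (\<Sum>j\<in>UNIV. \<alpha> j) \<le> p}"

text \<open>P_p(Q_d): real polynomial functions of total degree at most p on R^d (d = CARD('n)).\<close>
definition Poly_tot :: "nat \<Rightarrow> (real^'n::finite \<Rightarrow> real) set" where
  "Poly_tot p = {v. \<exists>c :: ('n \<Rightarrow> nat) \<Rightarrow> real.
      v = (\<lambda>x. \<Sum>\<alpha>\<in>multi_idx p. c \<alpha> * (\<Prod>j\<in>UNIV. (x $ j) ^ (\<alpha> j)))}"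

definition partial :: "'n::finite \<Rightarrow> (real^'n \<Rightarrow> real) \<Rightarrow> real^'n \<Rightarrow> real" where
  "partial i v x = deriv (\<lambda>t. v (x + t *\<^sub>R axis i 1)) 0"

definition L2_Q :: "(real^'n::finite \<Rightarrow> real) \<Rightarrow> real" where
  "L2_Q v = sqrt (integral (cbox 0 1) (\<lambda>x. (v x)^2))"

end

theory Submission
  imports Defs
begin

text \<open>On every line parallel to the \<open>i\<close>-th axis, \<open>v\<close> is a univariate polynomial of degree
  at most \<open>p\<close> and \<open>partial i v\<close> is its derivative, so the univariate inverse inequality holds on
  each such segment of the cube; Tonelli's theorem integrates these inequalities over the remaining
  coordinates. The one subtle point is that the infimum \<open>C_p1 p\<close> is itself an admissible constant,
  which needs some admissible constant to exist: on the unit sphere of coefficient vectors the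
  Gram form of the monomials on \<open>(0,1)\<close> is positive, hence bounded below by compactness, while
  the Gram form of their derivatives is bounded above.\<close>

text \<open>Coefficient vectors are functions \<open>nat \<Rightarrow> real\<close> of which only the entries \<open>0..p\<close> matter.\<close>

definition quad_form :: "nat \<Rightarrow> (nat \<Rightarrow> nat \<Rightarrow> real) \<Rightarrow> (nat \<Rightarrow> real) \<Rightarrow> real" where
  "quad_form p A a = (\<Sum>j\<le>p. \<Sum>k\<le>p. A j k * a j * a k)"

lemma quad_form_cong:
  "(\<And>k. k \<le> p \<Longrightarrow> a k = b k) \<Longrightarrow> quad_form p A a = quad_form p A b"
  unfolding quad_form_def by (intro sum.cong) auto

lemma quad_form_scale: "quad_form p A (\<lambda>k. r * a k) = r\<^sup>2 * quad_form p A a"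
  unfolding quad_form_def by (simp add: sum_distrib_left algebra_simps power2_eq_square)

lemma continuous_on_quad_form: "continuous_on S (quad_form p A)"
  unfolding quad_form_def[abs_def]
  by (intro continuous_intros continuous_on_product_then_coordinatewise continuous_on_id)

lemma quad_form_le_sum_squares:
  "quad_form p A a \<le> (\<Sum>j\<le>p. \<Sum>k\<le>p. \<bar>A j k\<bar>) * (\<Sum>k\<le>p. (a k)\<^sup>2)"
proof -
  have "A j k * a j * a k \<le> \<bar>A j k\<bar> * (\<Sum>k\<le>p. (a k)\<^sup>2)" if "j \<le> p" "k \<le> p" for j k
  proof -
    have "\<bar>a j * a k\<bar> \<le> ((a j)\<^sup>2 + (a k)\<^sup>2) / 2"
      using sum_squares_bound[of "\<bar>a j\<bar>" "\<bar>a k\<bar>"] by (simp add: abs_mult algebra_simps)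
    also have "\<dots> \<le> (\<Sum>k\<le>p. (a k)\<^sup>2)"
      using that member_le_sum[of j "{..p}" "\<lambda>k. (a k)\<^sup>2"] member_le_sum[of k "{..p}" "\<lambda>k. (a k)\<^sup>2"]
      by auto
    finally have "\<bar>a j * a k\<bar> \<le> (\<Sum>k\<le>p. (a k)\<^sup>2)" .
    then have "\<bar>A j k\<bar> * \<bar>a j * a k\<bar> \<le> \<bar>A j k\<bar> * (\<Sum>k\<le>p. (a k)\<^sup>2)"
      by (rule mult_left_mono) simp
    moreover have "A j k * a j * a k \<le> \<bar>A j k\<bar> * \<bar>a j * a k\<bar>"
      by (metis abs_ge_self abs_mult mult.assoc)
    ultimately show ?thesis by linarith
  qed
  then show ?thesis
    unfolding quad_form_def sum_distrib_right by (intro sum_mono) auto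
qed

lemma compact_unit_sphere_coefficients:
  "compact ((\<Pi>\<^sub>E k\<in>UNIV. {-1..1}) \<inter> {a::nat \<Rightarrow> real. (\<Sum>k\<le>p. (a k)\<^sup>2) = 1})"
proof -
  have "compactin (product_topology (\<lambda>_. euclidean) UNIV) (\<Pi>\<^sub>E k\<in>UNIV. {-1..1::real})"
    by (simp add: compactin_PiE)
  then have "compact (\<Pi>\<^sub>E k\<in>UNIV. {-1..1::real})"
    by (simp only: euclidean_product_topology compactin_euclidean_iff)
  moreover have "closed {a::nat \<Rightarrow> real. (\<Sum>k\<le>p. (a k)\<^sup>2) = 1}"
    by (intro closed_Collect_eq continuous_intros continuous_on_product_then_coordinatewise continuous_on_id)
  ultimately show ?thesis
    by (rule compact_Int_closed)
qed

lemma quad_form_bounded_below_on_sphere: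
  assumes pos_def: "\<And>a. (\<exists>k\<le>p. a k \<noteq> 0) \<Longrightarrow> quad_form p A a > 0"
  obtains m where "m > 0" "\<And>b. (\<Sum>k\<le>p. (b k)\<^sup>2) = 1 \<Longrightarrow> m \<le> quad_form p A b"
proof -
  define S where "S = (\<Pi>\<^sub>E k\<in>UNIV. {-1..1}) \<inter> {a::nat \<Rightarrow> real. (\<Sum>k\<le>p. (a k)\<^sup>2) = 1}"
  have "(\<Sum>k\<le>p. (if k = 0 then 1 else 0::real)\<^sup>2) = (\<Sum>k\<le>p. if k = 0 then 1 else 0)"
    by (intro sum.cong) auto
  then have "(\<lambda>k. if k = 0 then 1 else 0) \<in> S"
    unfolding S_def by (simp add: PiE_iff)
  then have "S \<noteq> {}" by blast
  moreover have "compact S"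
    unfolding S_def by (rule compact_unit_sphere_coefficients)
  ultimately obtain u where "u \<in> S" and u_min: "\<And>b. b \<in> S \<Longrightarrow> quad_form p A u \<le> quad_form p A b"
    using continuous_attains_inf[of S "quad_form p A"] continuous_on_quad_form by blast
  have "\<exists>k\<le>p. u k \<noteq> 0"
  proof (rule ccontr)
    assume "\<not> (\<exists>k\<le>p. u k \<noteq> 0)"
    then have "(\<Sum>k\<le>p. (u k)\<^sup>2) = 0" by simp
    with \<open>u \<in> S\<close> show False unfolding S_def by simp
  qed
  then have "quad_form p A u > 0" by (rule pos_def)
  moreover have "quad_form p A u \<le> quad_form p A b" if b: "(\<Sum>k\<le>p. (b k)\<^sup>2) = 1" for b
  proof -
    define b' where "b' = (\<lambda>k. if k \<le> p then b k else 0)"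
    have "\<bar>b' k\<bar> \<le> 1" for k
    proof (cases "k \<le> p")
      case True
      then have "(b k)\<^sup>2 \<le> (\<Sum>k\<le>p. (b k)\<^sup>2)"
        by (intro member_le_sum) auto
      with True b show ?thesis by (simp add: b'_def abs_square_le_1)
    qed (simp add: b'_def)
    with b have "b' \<in> S" unfolding S_def by (simp add: PiE_iff abs_le_iff b'_def)
    then have "quad_form p A u \<le> quad_form p A b'" by (rule u_min)
    also have "\<dots> = quad_form p A b"
      by (rule quad_form_cong) (simp add: b'_def)
    finally show ?thesis .
  qed
  ultimately show ?thesis by (rule that)
qed

lemma quad_form_coercive:
  assumes "\<And>a. (\<exists>k\<le>p. a k \<noteq> 0) \<Longrightarrow> quad_form p A a > 0"
  obtains m where "m > 0" "\<And>a. m * (\<Sum>k\<le>p. (a k)\<^sup>2) \<le> quad_form p A a"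
proof -
  obtain m where "m > 0" and m: "\<And>b. (\<Sum>k\<le>p. (b k)\<^sup>2) = 1 \<Longrightarrow> m \<le> quad_form p A b"
    using quad_form_bounded_below_on_sphere[OF assms] by blast
  have "m * (\<Sum>k\<le>p. (a k)\<^sup>2) \<le> quad_form p A a" for a
  proof (cases "\<forall>k\<le>p. a k = 0")
    case True
    then have "quad_form p A a = quad_form p A (\<lambda>_. 0)"
      by (intro quad_form_cong) simp
    then show ?thesis using True by (simp add: quad_form_def)
  next
    case False
    then obtain k where "k \<le> p" "a k \<noteq> 0" by blast
    then have sum_pos: "(\<Sum>k\<le>p. (a k)\<^sup>2) > 0"
      by (intro sum_pos2[of "{..p}" k]) auto
    define r where "r = sqrt (\<Sum>k\<le>p. (a k)\<^sup>2)"
    have r_pos: "r > 0" and r_sq: "r\<^sup>2 = (\<Sum>k\<le>p. (a k)\<^sup>2)"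
      using sum_pos unfolding r_def by auto
    have "(\<Sum>k\<le>p. (a k / r)\<^sup>2) = (\<Sum>k\<le>p. (a k)\<^sup>2) / r\<^sup>2"
      by (simp add: power_divide sum_divide_distrib)
    then have "(\<Sum>k\<le>p. (a k / r)\<^sup>2) = 1"
      using r_sq sum_pos by simp
    then have "r\<^sup>2 * m \<le> r\<^sup>2 * quad_form p A (\<lambda>k. a k / r)"
      by (intro mult_left_mono m) simp_all
    also have "\<dots> = quad_form p A a"
      using r_pos by (simp flip: quad_form_scale)
    finally show ?thesis
      using r_sq by (simp add: mult.commute)
  qed
  with \<open>m > 0\<close> show ?thesis by (rule that)
qed

lemma quad_form_dominated:
  assumes "\<And>a. (\<exists>k\<le>p. a k \<noteq> 0) \<Longrightarrow> quad_form p A a > 0"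
  obtains C where "C \<ge> 0" "\<And>a. quad_form p B a \<le> C * quad_form p A a"
proof -
  obtain m where m: "m > 0" "\<And>a. m * (\<Sum>k\<le>p. (a k)\<^sup>2) \<le> quad_form p A a"
    using quad_form_coercive[OF assms] by blast
  define \<beta> where "\<beta> = (\<Sum>j\<le>p. \<Sum>k\<le>p. \<bar>B j k\<bar>)"
  have "\<beta> \<ge> 0" unfolding \<beta>_def by (intro sum_nonneg) auto
  show ?thesis
  proof (rule that)
    show "\<beta> / m \<ge> 0" using \<open>\<beta> \<ge> 0\<close> \<open>m > 0\<close> by simp
    fix a
    have "quad_form p B a \<le> \<beta> / m * (m * (\<Sum>k\<le>p. (a k)\<^sup>2))"
      using quad_form_le_sum_squares[of p B a] \<open>m > 0\<close> by (simp add: \<beta>_def)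
    also have "\<dots> \<le> \<beta> / m * quad_form p A a"
      using \<open>\<beta> / m \<ge> 0\<close> by (intro mult_left_mono m(2))
    finally show "quad_form p B a \<le> \<beta> / m * quad_form p A a" .
  qed
qed

definition gram_matrix :: "real \<Rightarrow> real \<Rightarrow> (nat \<Rightarrow> real \<Rightarrow> real) \<Rightarrow> nat \<Rightarrow> nat \<Rightarrow> real" where
  "gram_matrix a b \<phi> j k = integral {a..b} (\<lambda>x. \<phi> j x * \<phi> k x)"

lemma integral_square_sum_eq_quad_form:
  assumes "\<And>k. continuous_on {a..b} (\<phi> k)"
  shows "integral {a..b} (\<lambda>x. (\<Sum>k\<le>p. c k * \<phi> k x)\<^sup>2) = quad_form p (gram_matrix a b \<phi>) c"
proof -
  have "(\<lambda>x. \<phi> j x * \<phi> k x) integrable_on {a..b}" for j k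
    by (intro integrable_continuous_interval continuous_intros assms)
  then have "((\<lambda>x. \<Sum>j\<le>p. \<Sum>k\<le>p. (\<phi> j x * \<phi> k x) * c j * c k) has_integral
      quad_form p (gram_matrix a b \<phi>) c) {a..b}"
    unfolding quad_form_def gram_matrix_def
    by (intro has_integral_sum finite_atMost has_integral_mult_left integrable_integral)
  moreover have "(\<Sum>k\<le>p. c k * \<phi> k x)\<^sup>2 = (\<Sum>j\<le>p. \<Sum>k\<le>p. (\<phi> j x * \<phi> k x) * c j * c k)" for x
    by (simp add: power2_eq_square sum_product algebra_simps)
  ultimately show ?thesis
    by (simp add: integral_unique)
qed

lemma poly_eq_sum_coeff:
  fixes q :: "'a::comm_semiring_1 poly"
  assumes "degree q \<le> p"
  shows "poly q x = (\<Sum>k\<le>p. coeff q k * x ^ k)"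
  by (subst poly_as_sum_of_monoms'[OF assms, symmetric]) (simp add: poly_sum poly_monom)

lemma poly_pderiv_eq_sum_coeff:
  fixes q :: "'a::{comm_semiring_1,semiring_no_zero_divisors} poly"
  assumes "degree q \<le> p"
  shows "poly (pderiv q) x = (\<Sum>k\<le>p. coeff q k * (of_nat k * x ^ (k - 1)))"
  by (subst poly_as_sum_of_monoms'[OF assms, symmetric])
     (simp add: higher_pderiv_sum[of 1, simplified] pderiv_monom poly_sum poly_monom algebra_simps)

lemma integral_poly_square_pos:
  fixes q :: "real poly"
  assumes "q \<noteq> 0" "a < b"
  shows "integral {a..b} (\<lambda>x. (poly q x)\<^sup>2) > 0"
proof -
  have "integral {a..b} (\<lambda>x. (poly q x)\<^sup>2) \<ge> 0"
    by (intro integral_nonneg integrable_continuous_interval continuous_intros) simp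
  moreover have "\<not> (\<forall>x\<in>{a..b}. (poly q x)\<^sup>2 = 0)"
  proof
    assume "\<forall>x\<in>{a..b}. (poly q x)\<^sup>2 = 0"
    then have "{a..b} \<subseteq> {x. poly q x = 0}" by auto
    then show False
      using poly_roots_finite[OF \<open>q \<noteq> 0\<close>] infinite_Icc[OF \<open>a < b\<close>] finite_subset by blast
  qed
  ultimately show ?thesis
    using integral_eq_0_iff[of a b "\<lambda>x. (poly q x)\<^sup>2"] \<open>a < b\<close> by (force intro: continuous_intros)
qed

lemma monomial_gram_pos_def:
  assumes "\<exists>k\<le>p. c k \<noteq> 0"
  shows "quad_form p (gram_matrix 0 1 (\<lambda>k x. x ^ k)) c > 0"
proof -
  define q where "q = (\<Sum>k\<le>p. monom (c k) k)"
  from assms obtain k where "k \<le> p" "c k \<noteq> 0" by blast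
  then have "coeff q k \<noteq> 0"
    by (simp add: q_def coeff_sum coeff_monom)
  then have "integral {0..1} (\<lambda>x. (poly q x)\<^sup>2) > 0"
    by (intro integral_poly_square_pos) auto
  also have "integral {0..1} (\<lambda>x. (poly q x)\<^sup>2) = integral {0..1} (\<lambda>x. (\<Sum>k\<le>p. c k * x ^ k)\<^sup>2)"
    by (simp add: q_def poly_sum poly_monom)
  also have "\<dots> = quad_form p (gram_matrix 0 1 (\<lambda>k x. x ^ k)) c"
    by (intro integral_square_sum_eq_quad_form continuous_intros)
  finally show ?thesis .
qed

lemma L2_01_nonneg: "L2_01 q \<ge> 0"
  unfolding L2_01_def
  by (intro real_sqrt_ge_zero integral_nonneg integrable_continuous_interval continuous_intros) simp

lemma L2_01_eq_sqrt_quad_form: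
  assumes "degree q \<le> p"
  shows "L2_01 q = sqrt (quad_form p (gram_matrix 0 1 (\<lambda>k x. x ^ k)) (coeff q))"
    and "L2_01 (pderiv q) = sqrt (quad_form p (gram_matrix 0 1 (\<lambda>k x. of_nat k * x ^ (k - 1))) (coeff q))"
  unfolding L2_01_def poly_eq_sum_coeff[OF assms] poly_pderiv_eq_sum_coeff[OF assms]
  by (simp_all add: integral_square_sum_eq_quad_form continuous_intros)

lemma pderiv_inverse_inequality_exists:
  obtains C where "C \<ge> 0" "\<And>q. degree q \<le> p \<Longrightarrow> L2_01 (pderiv q) \<le> C * L2_01 q"
proof -
  obtain C where "C \<ge> 0" and C: "\<And>c. quad_form p (gram_matrix 0 1 (\<lambda>k x. of_nat k * x ^ (k - 1))) c
      \<le> C * quad_form p (gram_matrix 0 1 (\<lambda>k x. x ^ k)) c"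
    using quad_form_dominated[OF monomial_gram_pos_def] by blast
  show ?thesis
  proof (rule that)
    show "sqrt C \<ge> 0" using \<open>C \<ge> 0\<close> by simp
    fix q :: "real poly"
    assume "degree q \<le> p"
    then show "L2_01 (pderiv q) \<le> sqrt C * L2_01 q"
      using C[of "coeff q"] by (simp add: L2_01_eq_sqrt_quad_form real_sqrt_mult[symmetric])
  qed
qed

lemma C_p1_admissible_nonempty:
  "{C. \<forall>q::real poly. degree q \<le> p \<longrightarrow> L2_01 (pderiv q) \<le> C * L2_01 q} \<noteq> {}"
  using pderiv_inverse_inequality_exists[of p] by blast

lemma C_p1_nonneg: "C_p1 p \<ge> 0"
  unfolding C_p1_def
proof (rule cInf_greatest[OF C_p1_admissible_nonempty])
  fix C
  assume "C \<in> {C. \<forall>q::real poly. degree q \<le> p \<longrightarrow> L2_01 (pderiv q) \<le> C * L2_01 q}"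
  then have "L2_01 (pderiv 1) \<le> C * L2_01 1"
    by (metis (mono_tags) degree_1 mem_Collect_eq zero_le)
  then show "0 \<le> C" by (simp add: L2_01_def)
qed

lemma L2_01_pderiv_le_C_p1:
  assumes "degree q \<le> p"
  shows "L2_01 (pderiv q) \<le> C_p1 p * L2_01 q"
proof (cases "L2_01 q = 0")
  case True
  obtain C where "\<forall>q::real poly. degree q \<le> p \<longrightarrow> L2_01 (pderiv q) \<le> C * L2_01 q"
    using C_p1_admissible_nonempty by blast
  with assms True show ?thesis by force
next
  case False
  then have "L2_01 q > 0" using L2_01_nonneg[of q] by linarith
  have "L2_01 (pderiv q) / L2_01 q \<le> C_p1 p"
    unfolding C_p1_def
  proof (rule cInf_greatest[OF C_p1_admissible_nonempty])
    fix C
    assume "C \<in> {C. \<forall>q::real poly. degree q \<le> p \<longrightarrow> L2_01 (pderiv q) \<le> C * L2_01 q}"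
    with assms \<open>L2_01 q > 0\<close> show "L2_01 (pderiv q) / L2_01 q \<le> C"
      by (simp add: divide_le_eq)
  qed
  with \<open>L2_01 q > 0\<close> show ?thesis by (simp add: divide_le_eq)
qed

lemma integral_pderiv_square_le_C_p1:
  assumes "degree q \<le> p"
  shows "integral {0..1} (\<lambda>x. (poly (pderiv q) x)\<^sup>2) \<le> (C_p1 p)\<^sup>2 * integral {0..1} (\<lambda>x. (poly q x)\<^sup>2)"
proof -
  have "integral {0..1} (\<lambda>x. (poly (pderiv q) x)\<^sup>2) = (L2_01 (pderiv q))\<^sup>2"
    and "integral {0..1} (\<lambda>x. (poly q x)\<^sup>2) = (L2_01 q)\<^sup>2"
    unfolding L2_01_def
    by (simp_all add: integral_nonneg integrable_continuous_interval continuous_intros)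
  then show ?thesis
    using L2_01_pderiv_le_C_p1[OF assms] L2_01_nonneg
    by (simp add: power_mono flip: power_mult_distrib)
qed

definition vec_upd :: "'a^'n \<Rightarrow> 'n \<Rightarrow> 'a \<Rightarrow> 'a^'n" where
  "vec_upd x i t = (\<chi> j. if j = i then t else x $ j)"

lemma vec_upd_nth [simp]: "vec_upd x i t $ j = (if j = i then t else x $ j)"
  by (simp add: vec_upd_def)

lemma vec_upd_vec_upd [simp]: "vec_upd (vec_upd x i t) i s = vec_upd x i s"
  by (simp add: vec_eq_iff)

lemma add_axis_eq_vec_upd: "x + s *\<^sub>R axis i 1 = vec_upd x i (x $ i + s)"
  by (simp add: vec_eq_iff axis_def)

lemma continuous_on_vec_upd: "continuous_on S (vec_upd x i)"
  unfolding vec_upd_def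
proof (intro continuous_on_vec_lambda)
  show "continuous_on S (\<lambda>t. if j = i then t else x $ j)" for j
    by (cases "j = i") (simp_all add: continuous_on_id)
qed

lemma partial_eq_poly_pderiv:
  assumes "\<And>t. v (vec_upd x i t) = poly q t"
  shows "partial i v x = poly (pderiv q) (x $ i)"
proof -
  have "((\<lambda>s. poly q (x $ i + s)) has_real_derivative poly (pderiv q) (x $ i + 0) * 1) (at 0)"
    by (intro DERIV_chain2[where f="poly q"] poly_DERIV derivative_eq_intros) auto
  then show ?thesis
    unfolding partial_def add_axis_eq_vec_upd assms by (simp add: DERIV_imp_deriv)
qed

definition mpoly_fun :: "nat \<Rightarrow> (('n::finite \<Rightarrow> nat) \<Rightarrow> real) \<Rightarrow> real^'n \<Rightarrow> real" where
  "mpoly_fun p c = (\<lambda>x. \<Sum>\<alpha>\<in>multi_idx p. c \<alpha> * (\<Prod>j\<in>UNIV. (x $ j) ^ \<alpha> j))"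

lemma Poly_tot_eq_range_mpoly_fun: "Poly_tot p = range (mpoly_fun p)"
  unfolding Poly_tot_def mpoly_fun_def by auto

definition slice_poly :: "nat \<Rightarrow> (('n::finite \<Rightarrow> nat) \<Rightarrow> real) \<Rightarrow> 'n \<Rightarrow> real^'n \<Rightarrow> real poly" where
  "slice_poly p c i x = (\<Sum>\<alpha>\<in>multi_idx p. monom (c \<alpha> * (\<Prod>j\<in>-{i}. (x $ j) ^ \<alpha> j)) (\<alpha> i))"

lemma multi_idx_le: "\<alpha> \<in> multi_idx p \<Longrightarrow> \<alpha> j \<le> p"
  unfolding multi_idx_def using member_le_sum[of j UNIV \<alpha>] by auto

lemma finite_multi_idx: "finite (multi_idx p)"
proof (rule finite_subset)
  show "multi_idx p \<subseteq> (\<Pi>\<^sub>E j\<in>UNIV. {..p})"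
    using multi_idx_le by (auto simp: PiE_iff)
qed (simp add: finite_PiE)

lemma degree_slice_poly: "degree (slice_poly p c i x) \<le> p"
  unfolding slice_poly_def
  by (intro degree_sum_le finite_multi_idx order.trans[OF degree_monom_le] multi_idx_le)

lemma poly_slice_poly: "poly (slice_poly p c i x) t = mpoly_fun p c (vec_upd x i t)"
proof -
  have "(\<Prod>j\<in>UNIV. (vec_upd x i t $ j) ^ \<alpha> j) = t ^ \<alpha> i * (\<Prod>j\<in>-{i}. (x $ j) ^ \<alpha> j)" for \<alpha>
    by (subst prod.remove[of UNIV i]) (auto intro!: prod.cong simp: Compl_eq_Diff_UNIV)
  then show ?thesis
    unfolding slice_poly_def mpoly_fun_def by (simp add: poly_sum poly_monom mult_ac)
qed

lemma partial_mpoly_fun: "partial i (mpoly_fun p c) x = poly (pderiv (slice_poly p c i x)) (x $ i)"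
  by (rule partial_eq_poly_pderiv) (simp add: poly_slice_poly)

lemma continuous_on_mpoly_fun: "continuous_on S (mpoly_fun p c)"
  unfolding mpoly_fun_def by (intro continuous_intros)

lemma continuous_on_partial_mpoly_fun: "continuous_on S (partial i (mpoly_fun p c))"
  unfolding partial_mpoly_fun[abs_def] slice_poly_def
  by (simp add: higher_pderiv_sum[of 1, simplified] pderiv_monom poly_sum poly_monom continuous_intros)

lemma sum_Basis_vec_nth: "(\<Sum>b\<in>Basis. \<omega> b *\<^sub>R b) $ j = \<omega> (axis j (1::real))"
proof -
  have "(\<Sum>b\<in>Basis. \<omega> b *\<^sub>R b) $ j = (\<Sum>b\<in>Basis. \<omega> b * (b \<bullet> axis j 1))"
    by (simp add: cart_eq_inner_axis inner_sum_left)
  also have "\<dots> = \<omega> (axis j 1)"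
    by (simp add: inner_Basis if_distrib sum.delta' cong: if_cong)
  finally show ?thesis .
qed

lemma sum_Basis_fun_upd:
  "(\<Sum>b\<in>Basis. (fun_upd \<omega> (axis i 1) t) b *\<^sub>R b) = vec_upd (\<Sum>b\<in>Basis. \<omega> b *\<^sub>R b) i (t::real)"
  by (simp only: vec_eq_iff sum_Basis_vec_nth vec_upd_nth) (simp add: axis_eq_axis)

text \<open>Tonelli along the \<open>i\<close>-th axis: \<open>lborel\<close> is the image of the product measure over
  \<open>Basis\<close> (\<open>lborel_eq\<close>); the coordinate of \<open>\<omega>\<close> at \<open>axis i 1\<close> is irrelevant because
  \<open>vec_upd\<close> overwrites it.\<close>

lemma nn_integral_lborel_along_axis:
  fixes f :: "real^'n \<Rightarrow> ennreal"
  assumes f: "f \<in> borel_measurable borel"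
  shows "integral\<^sup>N lborel f = (\<integral>\<^sup>+\<omega>. (\<integral>\<^sup>+t. f (vec_upd (\<Sum>b\<in>Basis. \<omega> b *\<^sub>R b) i t) \<partial>lborel)
           \<partial>(\<Pi>\<^sub>M b\<in>Basis - {axis i 1}. lborel))"
proof -
  interpret product_sigma_finite "\<lambda>_::real^'n. lborel :: real measure" by standard
  define \<Phi> where "\<Phi> = (\<lambda>\<omega>::real^'n \<Rightarrow> real. \<Sum>b\<in>Basis. \<omega> b *\<^sub>R b)"
  have Basis_eq: "insert (axis i 1) (Basis - {axis i 1}) = (Basis :: (real^'n) set)"
    by (auto simp: Basis_real_def)
  have f_\<Phi>: "(\<lambda>\<omega>. f (\<Phi> \<omega>)) \<in> borel_measurable (\<Pi>\<^sub>M b\<in>Basis. lborel)"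
    unfolding \<Phi>_def using f by measurable
  have "integral\<^sup>N lborel f = (\<integral>\<^sup>+\<omega>. f (\<Phi> \<omega>) \<partial>(\<Pi>\<^sub>M b\<in>Basis. lborel))"
    unfolding \<Phi>_def by (subst lborel_eq) (simp add: nn_integral_distr f)
  also have "\<dots> = (\<integral>\<^sup>+\<omega>. (\<integral>\<^sup>+t. f (\<Phi> (fun_upd \<omega> (axis i 1) t)) \<partial>lborel) \<partial>(\<Pi>\<^sub>M b\<in>Basis - {axis i 1}. lborel))"
    using product_nn_integral_insert[of "Basis - {axis i 1}" "axis i 1" "\<lambda>\<omega>. f (\<Phi> \<omega>)"] f_\<Phi>
    unfolding Basis_eq by simp
  finally show ?thesis
    by (simp only: \<Phi>_def sum_Basis_fun_upd)
qed

lemma nn_integral_indicator_cbox_continuous: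
  fixes f :: "'a::euclidean_space \<Rightarrow> real"
  assumes "continuous_on (cbox a b) f" "\<And>x. x \<in> cbox a b \<Longrightarrow> 0 \<le> f x"
  shows "(\<integral>\<^sup>+x. ennreal (f x) * indicator (cbox a b) x \<partial>lborel) = ennreal (integral (cbox a b) f)"
  using assms by (intro nn_integral_has_integral_lebesgue' integrable_integral integrable_continuous)

lemma nn_integral_cube_slice:
  fixes h :: "real^'n \<Rightarrow> real"
  assumes "continuous_on UNIV h" "\<And>x. 0 \<le> h x"
  shows "(\<integral>\<^sup>+t. ennreal (h (vec_upd x i t)) * indicator (cbox 0 1) (vec_upd x i t) \<partial>lborel) =
    (if \<forall>j. j \<noteq> i \<longrightarrow> x $ j \<in> {0..1} then ennreal (integral {0..1} (\<lambda>t. h (vec_upd x i t))) else 0)"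
proof (cases "\<forall>j. j \<noteq> i \<longrightarrow> x $ j \<in> {0..1}")
  case True
  then have "indicator (cbox 0 1) (vec_upd x i t) = (indicator (cbox 0 1) t :: ennreal)" for t
    by (auto simp: indicator_def mem_box_cart)
  then have "(\<integral>\<^sup>+t. ennreal (h (vec_upd x i t)) * indicator (cbox 0 1) (vec_upd x i t) \<partial>lborel)
      = (\<integral>\<^sup>+t. ennreal (h (vec_upd x i t)) * indicator (cbox 0 1) t \<partial>lborel)"
    by simp
  also have "\<dots> = ennreal (integral (cbox 0 1) (\<lambda>t. h (vec_upd x i t)))"
    by (intro nn_integral_indicator_cbox_continuous assms(2)
        continuous_on_compose2[OF assms(1) continuous_on_vec_upd]) simp_all
  finally show ?thesis
    using True by simp
next
  case False
  then have "indicator (cbox 0 1) (vec_upd x i t) = (0 :: ennreal)" for t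
    by (auto simp: indicator_def mem_box_cart)
  then show ?thesis unfolding if_not_P[OF False] by simp
qed

lemma integral_cube_mono_along_axis:
  fixes f g :: "real^'n \<Rightarrow> real"
  assumes f: "continuous_on UNIV f" "\<And>x. 0 \<le> f x"
    and g: "continuous_on UNIV g" "\<And>x. 0 \<le> g x"
    and slices: "\<And>x. integral {0..1} (\<lambda>t. f (vec_upd x i t)) \<le> integral {0..1} (\<lambda>t. g (vec_upd x i t))"
  shows "integral (cbox 0 1) f \<le> integral (cbox 0 1) g"
proof -
  define F where "F h x = ennreal (h x) * indicator (cbox 0 (1::real^'n)) x" for h x
  have F_measurable: "F h \<in> borel_measurable borel" if "continuous_on UNIV h" for h
  proof -
    have [measurable]: "h \<in> borel_measurable borel"
      using that by (rule borel_measurable_continuous_onI)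
    show ?thesis unfolding F_def by measurable
  qed
  have cube_eq: "integral\<^sup>N lborel (F h) = ennreal (integral (cbox 0 1) h)"
    if "continuous_on UNIV h" "\<And>x. 0 \<le> h x" for h
    unfolding F_def
    by (intro nn_integral_indicator_cbox_continuous continuous_on_subset[OF that(1)] that(2)) simp
  have slice_le: "(\<integral>\<^sup>+t. F f (vec_upd x i t) \<partial>lborel) \<le> (\<integral>\<^sup>+t. F g (vec_upd x i t) \<partial>lborel)" for x
    unfolding F_def nn_integral_cube_slice[OF f] nn_integral_cube_slice[OF g]
    using slices by (auto intro: ennreal_leI)
  have "ennreal (integral (cbox 0 1) f) = integral\<^sup>N lborel (F f)"
    using f by (rule cube_eq[symmetric])
  also have "\<dots> \<le> integral\<^sup>N lborel (F g)"
    unfolding nn_integral_lborel_along_axis[OF F_measurable[OF f(1)], of i]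
      nn_integral_lborel_along_axis[OF F_measurable[OF g(1)], of i]
    by (intro nn_integral_mono slice_le)
  also have "\<dots> = ennreal (integral (cbox 0 1) g)"
    using g by (rule cube_eq)
  finally show ?thesis
    using integral_nonneg[OF integrable_continuous[OF continuous_on_subset[OF g(1)]] g(2)]
    by (simp add: ennreal_le_iff)
qed

theorem lemmaA1:
  fixes p :: nat and v :: "real^'n::finite \<Rightarrow> real" and i :: 'n
  assumes "v \<in> Poly_tot p"
  shows "L2_Q (partial i v) \<le> C_p1 p * L2_Q v"
proof -
  obtain c where v: "v = mpoly_fun p c"
    using assms unfolding Poly_tot_eq_range_mpoly_fun by blast
  have "integral {0..1} (\<lambda>t. (partial i v (vec_upd x i t))\<^sup>2)
      \<le> integral {0..1} (\<lambda>t. (C_p1 p)\<^sup>2 * (v (vec_upd x i t))\<^sup>2)" for x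
  proof -
    have "partial i v (vec_upd x i t) = poly (pderiv (slice_poly p c i x)) t" for t
      using partial_eq_poly_pderiv[of v "vec_upd x i t" i] by (simp add: v poly_slice_poly)
    then show ?thesis
      using integral_pderiv_square_le_C_p1[OF degree_slice_poly] by (simp add: v poly_slice_poly)
  qed
  then have "integral (cbox 0 1) (\<lambda>x. (partial i v x)\<^sup>2) \<le> integral (cbox 0 1) (\<lambda>x. (C_p1 p)\<^sup>2 * (v x)\<^sup>2)"
    by (intro integral_cube_mono_along_axis)
       (simp_all add: v continuous_on_mpoly_fun continuous_on_partial_mpoly_fun continuous_intros)
  then have "L2_Q (partial i v) \<le> sqrt ((C_p1 p)\<^sup>2 * integral (cbox 0 1) (\<lambda>x. (v x)\<^sup>2))"
    unfolding L2_Q_def by simp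
  also have "\<dots> = C_p1 p * L2_Q v"
    unfolding L2_Q_def using C_p1_nonneg[of p] by (simp add: real_sqrt_mult)
  finally show ?thesis .
qed

end
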